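(* Let $(x_1,\dots,x_n)$ be uniformly distributed on $\{x\in\{0,1\}^n:\sum_{j=1}^n x_j=s\}$, let $p=s/n$, let $a_1,\dots,a_n\in\mathbb{R}$, and let $t\in\mathbb{R}$ satisfy $|(a_j-a_k)t|\le\pi$ for all $1\le j,k\le n$. Then \[\Big|\mathbb{E}\big[e^{it\sum_{j=1}^n a_jx_j}\big]\Big|\le(n+1)\exp\big[-2p(1-p)t^2\operatorname{Var}[a_J]\,n/\pi^2\big],\] where $\operatorname{Var}[a_J]$ is the variance of $a_J$ for $J$ uniform on $[n]$. *)

theory Defs
  imports "HOL-Probability.Probability"
begin

definition slice :: "nat \<Rightarrow> nat \<Rightarrow> (nat \<Rightarrow> nat) set" where
  "slice n s = {x \<in> PiE {1..n} (\<lambda>_. {0, 1}). (\<Sum>j=1..n. x j) = s}"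

end

theory Submission
  imports Defs
begin

text \<open>
  Let P = p^s (1 - p)^(n - s). Then P times the sum of cis (t * sum a A) over the s-subsets A
  of {1..n} is the coefficient of w^s in F w = prod_j ((1 - p) + p cis (t a_j) w), which is
  extracted by averaging w^(-s) F w over the (n + 1)-st roots of unity. On the unit circle each
  factor of F has modulus at most exp (- p (1 - p) (1 - cos phi_j)); as all phases phi_j lie in an
  arc of length pi, Jordan's inequality gives
  sum_j (1 - cos phi_j) >= sum_{j,k} (phi_j - phi_k)^2 / (n pi^2) = 2 n t^2 Var[a_J] / pi^2.
  Finally (n choose s) P is the largest term of the binomial distribution with parameters n and
  s / n, hence at least 1 / (n + 1).
\<close>

lemma two_x_div_pi_le_sin:
  fixes x :: real
  assumes "0 \<le> x" "x \<le> pi / 2"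
  shows "2 * x / pi \<le> sin x"
proof -
  have "convex_on {0..pi/2} (\<lambda>x. - sin x)"
  proof (rule f''_ge0_imp_convex[where f' = "\<lambda>x. - cos x" and f'' = sin])
    show "((\<lambda>x. - sin x) has_real_derivative - cos x) (at x)" for x
      by (auto intro!: derivative_eq_intros)
    show "((\<lambda>x. - cos x) has_real_derivative sin x) (at x)" for x
      by (auto intro!: derivative_eq_intros)
  qed (auto intro!: sin_ge_zero)
  moreover have "0 \<le> 2 * x / pi" "2 * x / pi \<le> 1"
    using assms by (auto simp: field_simps)
  ultimately have "- sin ((1 - 2 * x / pi) *\<^sub>R 0 + (2 * x / pi) *\<^sub>R (pi / 2))
      \<le> (1 - 2 * x / pi) * - sin 0 + (2 * x / pi) * - sin (pi / 2)"
    by (intro convex_onD) auto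
  then show ?thesis by simp
qed

lemma two_sq_div_pi_sq_le_one_minus_cos:
  fixes x :: real
  assumes "\<bar>x\<bar> \<le> pi"
  shows "2 * x\<^sup>2 / pi\<^sup>2 \<le> 1 - cos x"
proof -
  have "\<bar>x\<bar> / pi \<le> sin (\<bar>x\<bar> / 2)"
    using two_x_div_pi_le_sin[of "\<bar>x\<bar> / 2"] assms by simp
  then have "(\<bar>x\<bar> / pi)\<^sup>2 \<le> (sin (\<bar>x\<bar> / 2))\<^sup>2"
    by (intro power_mono) auto
  moreover have "cos x = 1 - 2 * (sin (\<bar>x\<bar> / 2))\<^sup>2"
    using cos_double_sin[of "\<bar>x\<bar> / 2"] by (cases "x \<ge> 0") auto
  ultimately show ?thesis by (simp add: power_divide)
qed

lemma sum_sum_cos_diff: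
  fixes b :: "'a \<Rightarrow> real"
  shows "(\<Sum>j\<in>I. \<Sum>k\<in>I. cos (b j - b k)) = (\<Sum>j\<in>I. cos (b j))\<^sup>2 + (\<Sum>j\<in>I. sin (b j))\<^sup>2"
  by (simp add: power2_eq_square sum_product cos_diff sum.distrib)

lemma sum_sq_diff_le_sum_one_minus_cos:
  fixes b :: "'a \<Rightarrow> real"
  assumes "finite I" "I \<noteq> {}"
    and "\<And>j k. j \<in> I \<Longrightarrow> k \<in> I \<Longrightarrow> \<bar>b j - b k\<bar> \<le> pi"
  shows "(\<Sum>j\<in>I. \<Sum>k\<in>I. (b j - b k)\<^sup>2) / (card I * pi\<^sup>2) \<le> (\<Sum>j\<in>I. 1 - cos (b j))"
proof -
  define N C D where "N = real (card I)" and "C = (\<Sum>j\<in>I. cos (b j))"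
    and "D = (\<Sum>j\<in>I. sin (b j))"
  have "N > 0" using assms by (simp add: N_def card_gt_0_iff)
  have "\<bar>C\<bar> \<le> (\<Sum>j\<in>I. \<bar>cos (b j)\<bar>)"
    unfolding C_def by (rule sum_abs)
  also have "\<dots> \<le> N"
    using sum_mono[of I "\<lambda>j. \<bar>cos (b j)\<bar>" "\<lambda>_. 1"] by (simp add: N_def)
  finally have "\<bar>C\<bar> \<le> N" .
  have "2 / pi\<^sup>2 * (\<Sum>j\<in>I. \<Sum>k\<in>I. (b j - b k)\<^sup>2) = (\<Sum>j\<in>I. \<Sum>k\<in>I. 2 * (b j - b k)\<^sup>2 / pi\<^sup>2)"
    by (simp add: sum_distrib_left)
  also have "\<dots> \<le> (\<Sum>j\<in>I. \<Sum>k\<in>I. 1 - cos (b j - b k))"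
    by (intro sum_mono two_sq_div_pi_sq_le_one_minus_cos assms)
  also have "\<dots> = N\<^sup>2 - C\<^sup>2 - D\<^sup>2"
    by (simp add: sum_subtractf sum_sum_cos_diff N_def C_def D_def power2_eq_square)
  also have "\<dots> \<le> (N - C) * (N + C)"
    by (simp add: power2_eq_square algebra_simps)
  also have "\<dots> \<le> (N - C) * (2 * N)"
    using \<open>\<bar>C\<bar> \<le> N\<close> by (intro mult_left_mono) auto
  finally show ?thesis
    using \<open>N > 0\<close> by (simp add: N_def C_def sum_subtractf field_simps)
qed

lemma norm_bernoulli_cis_le:
  fixes p \<phi> :: real
  assumes "0 \<le> p" "p \<le> 1"
  shows "cmod (of_real (1 - p) + of_real p * cis \<phi>) \<le> exp (- p * (1 - p) * (1 - cos \<phi>))"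
proof (rule power2_le_imp_le)
  have "(cmod (of_real (1 - p) + of_real p * cis \<phi>))\<^sup>2 = (1 - p + p * cos \<phi>)\<^sup>2 + (p * sin \<phi>)\<^sup>2"
    by (simp add: cmod_power2)
  also have "\<dots> = 1 - 2 * p * (1 - p) * (1 - cos \<phi>)"
    using sin_cos_squared_add[of \<phi>] by algebra
  also have "\<dots> \<le> exp (- 2 * p * (1 - p) * (1 - cos \<phi>))"
    using exp_ge_add_one_self[of "- 2 * p * (1 - p) * (1 - cos \<phi>)"] by simp
  also have "\<dots> = (exp (- p * (1 - p) * (1 - cos \<phi>)))\<^sup>2"
    by (simp flip: exp_double)
  finally show "(cmod (of_real (1 - p) + of_real p * cis \<phi>))\<^sup>2 \<le> (exp (- p * (1 - p) * (1 - cos \<phi>)))\<^sup>2" .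
qed simp

lemma norm_prod_bernoulli_cis_le:
  fixes p :: real and b :: "'a \<Rightarrow> real"
  assumes "0 \<le> p" "p \<le> 1" "finite I" "I \<noteq> {}"
    and "\<And>j k. j \<in> I \<Longrightarrow> k \<in> I \<Longrightarrow> \<bar>b j - b k\<bar> \<le> pi"
  shows "cmod (\<Prod>j\<in>I. of_real (1 - p) + of_real p * cis (b j))
    \<le> exp (- p * (1 - p) * (\<Sum>j\<in>I. \<Sum>k\<in>I. (b j - b k)\<^sup>2) / (card I * pi\<^sup>2))"
proof -
  have "cmod (\<Prod>j\<in>I. of_real (1 - p) + of_real p * cis (b j))
      \<le> (\<Prod>j\<in>I. exp (- p * (1 - p) * (1 - cos (b j))))"
    unfolding prod_norm[symmetric] by (intro prod_mono conjI norm_bernoulli_cis_le assms norm_ge_zero)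
  also have "\<dots> = exp (- p * (1 - p) * (\<Sum>j\<in>I. 1 - cos (b j)))"
    by (simp add: exp_sum assms sum_distrib_left)
  also have "\<dots> \<le> exp (- p * (1 - p) * ((\<Sum>j\<in>I. \<Sum>k\<in>I. (b j - b k)\<^sup>2) / (card I * pi\<^sup>2)))"
    using sum_sq_diff_le_sum_one_minus_cos[OF assms(3-5)] assms(1,2)
    unfolding exp_le_cancel_iff by (intro mult_left_mono_neg) auto
  finally show ?thesis by simp
qed

lemma prod_add_mult_eq_sum_Pow:
  fixes u w :: "'b::comm_semiring_1" and v :: "'a \<Rightarrow> 'b"
  assumes "finite I"
  shows "(\<Prod>j\<in>I. u + v j * w) = (\<Sum>A\<in>Pow I. u ^ card (I - A) * prod v A * w ^ card A)"
proof -
  have "(\<Prod>j\<in>I. u + v j * w) = (\<Prod>j\<in>I. v j * w + u)"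
    by (simp add: add.commute)
  also have "\<dots> = (\<Sum>A\<in>Pow I. (\<Prod>j\<in>A. v j * w) * (\<Prod>j\<in>I - A. u))"
    by (rule prod_add[OF assms])
  finally show ?thesis
    by (simp add: prod.distrib mult_ac)
qed

lemma sum_root_unity_powers:
  fixes N k :: nat
  assumes "N > 0"
  shows "(\<Sum>m<N. cis (2 * pi / N) ^ (m * k)) = (if N dvd k then of_nat N else 0)"
proof -
  define z where "z = cis (2 * pi / N) ^ k"
  have z_eq: "z = exp (2 * of_real pi * \<i> * of_nat k / of_nat N)"
    unfolding z_def Complex.DeMoivre unfolding cis_conv_exp by (simp add: field_simps)
  have "z ^ N = 1"
    using complex_root_unity[of N k] assms by (simp add: z_eq)
  have "(\<Sum>m<N. cis (2 * pi / N) ^ (m * k)) = (\<Sum>m<N. z ^ m)"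
    by (simp only: z_def mult.commute[of _ k] power_mult)
  also have "\<dots> = (if N dvd k then of_nat N else 0)"
  proof (cases "N dvd k")
    case True
    then have "z = 1"
      using complex_root_unity_eq_1[of N k] assms by (simp add: z_eq)
    with True show ?thesis by simp
  next
    case False
    then have "z \<noteq> 1"
      using complex_root_unity_eq_1[of N k] assms by (simp add: z_eq)
    with False \<open>z ^ N = 1\<close> show ?thesis by (simp add: geometric_sum)
  qed
  finally show ?thesis .
qed

text \<open>Since \<open>\<omega> ^ N = 1\<close>, the factor \<open>(\<omega> ^ m) ^ (N - s)\<close> is \<open>\<omega> ^ (- m s)\<close>.\<close>

lemma sum_root_unity_filter:
  fixes g :: "'a \<Rightarrow> complex" and d :: "'a \<Rightarrow> nat" and N s :: nat
  assumes "finite X" "s < N" "\<And>x. x \<in> X \<Longrightarrow> d x < N"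
  defines "\<omega> \<equiv> cis (2 * pi / N)"
  shows "(\<Sum>m<N. (\<omega> ^ m) ^ (N - s) * (\<Sum>x\<in>X. g x * (\<omega> ^ m) ^ d x))
    = of_nat N * (\<Sum>x | x \<in> X \<and> d x = s. g x)"
proof -
  have dvd_iff: "N dvd N + d x - s \<longleftrightarrow> d x = s" if "x \<in> X" for x
  proof (cases "s \<le> d x")
    case True
    then have "N + d x - s = N + (d x - s)"
      using assms(2) by simp
    then have "N dvd N + d x - s \<longleftrightarrow> N dvd d x - s"
      by (simp only: dvd_add_right_iff dvd_refl)
    also have "\<dots> \<longleftrightarrow> d x = s"
      using True assms(3)[OF that] by (auto dest: dvd_imp_le)
    finally show ?thesis .
  next
    case False
    then show ?thesis
      using nat_dvd_not_less[of "N + d x - s" N] assms(2) by auto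
  qed
  have "(\<Sum>m<N. (\<omega> ^ m) ^ (N - s) * (\<Sum>x\<in>X. g x * (\<omega> ^ m) ^ d x))
      = (\<Sum>x\<in>X. g x * (\<Sum>m<N. \<omega> ^ (m * (N + d x - s))))"
  proof -
    have "N + d x - s = (N - s) + d x" for x
      using assms(2) by simp
    then have term_eq: "(\<omega> ^ m) ^ (N - s) * (g x * (\<omega> ^ m) ^ d x) = g x * \<omega> ^ (m * (N + d x - s))"
      for m x
      by (simp only: power_mult power_add mult_ac)
    show ?thesis
      by (simp only: sum_distrib_left term_eq sum.swap[of _ "{..<N}"])
  qed
  also have "\<dots> = (\<Sum>x\<in>X. if d x = s then of_nat N * g x else 0)"
    using assms(2) by (intro sum.cong refl) (simp add: \<omega>_def sum_root_unity_powers dvd_iff)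
  also have "\<dots> = of_nat N * (\<Sum>x | x \<in> X \<and> d x = s. g x)"
    by (simp add: sum.If_cases assms(1) sum_distrib_left Collect_conj_eq Int_commute)
  finally show ?thesis .
qed

lemma prod_cis: "finite A \<Longrightarrow> (\<Prod>j\<in>A. cis (f j)) = cis (\<Sum>j\<in>A. f j)"
  by (induction A rule: finite_induct) (auto simp: cis_mult)

lemma norm_prod_bernoulli_cis_unit_le:
  fixes p t :: real and a :: "'a \<Rightarrow> real" and w :: complex
  assumes "0 \<le> p" "p \<le> 1" "finite I" "I \<noteq> {}" "cmod w = 1"
    and "\<And>j k. j \<in> I \<Longrightarrow> k \<in> I \<Longrightarrow> \<bar>(a j - a k) * t\<bar> \<le> pi"
  shows "cmod (\<Prod>j\<in>I. of_real (1 - p) + of_real p * cis (t * a j) * w)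
    \<le> exp (- p * (1 - p) * t\<^sup>2 * (\<Sum>j\<in>I. \<Sum>k\<in>I. (a j - a k)\<^sup>2) / (card I * pi\<^sup>2))"
proof -
  define b where "b j = t * a j + Arg w" for j
  have "w = cis (Arg w)"
    using assms(5) cis_Arg[of w] by (fastforce simp: sgn_div_norm)
  then have "(\<Prod>j\<in>I. of_real (1 - p) + of_real p * cis (t * a j) * w)
      = (\<Prod>j\<in>I. of_real (1 - p) + of_real p * cis (b j))"
    by (metis (no_types, lifting) b_def cis_mult mult.assoc)
  moreover have "\<bar>b j - b k\<bar> \<le> pi" if "j \<in> I" "k \<in> I" for j k
    using assms(6)[OF that] by (simp add: b_def algebra_simps)
  moreover have "(\<Sum>j\<in>I. \<Sum>k\<in>I. (b j - b k)\<^sup>2) = t\<^sup>2 * (\<Sum>j\<in>I. \<Sum>k\<in>I. (a j - a k)\<^sup>2)"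
    by (simp add: b_def sum_distrib_left power2_eq_square algebra_simps)
  ultimately show ?thesis
    using norm_prod_bernoulli_cis_le[OF assms(1-4), of b] by (simp add: mult.assoc)
qed

lemma norm_sum_cis_subsets_le:
  fixes p t :: real and a :: "'a \<Rightarrow> real" and s :: nat
  assumes "0 \<le> p" "p \<le> 1" "finite I" "I \<noteq> {}" "s \<le> card I"
    and "\<And>j k. j \<in> I \<Longrightarrow> k \<in> I \<Longrightarrow> \<bar>(a j - a k) * t\<bar> \<le> pi"
  shows "p ^ s * (1 - p) ^ (card I - s) * cmod (\<Sum>A | A \<subseteq> I \<and> card A = s. cis (t * sum a A))
    \<le> exp (- p * (1 - p) * t\<^sup>2 * (\<Sum>j\<in>I. \<Sum>k\<in>I. (a j - a k)\<^sup>2) / (card I * pi\<^sup>2))"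
    (is "?P * cmod ?\<Sigma> \<le> ?E")
proof -
  define N where "N = Suc (card I)"
  define \<omega> where "\<omega> = cis (2 * pi / N)"
  define F where "F w = (\<Prod>j\<in>I. of_real (1 - p) + of_real p * cis (t * a j) * w)" for w
  define g where "g A = of_real (p ^ card A * (1 - p) ^ (card I - card A)) * cis (t * sum a A)" for A
  have F_eq: "F w = (\<Sum>A\<in>Pow I. g A * w ^ card A)" for w
  proof -
    have "of_real (1 - p) ^ card (I - A) * (\<Prod>j\<in>A. of_real p * cis (t * a j)) = g A" if "A \<subseteq> I" for A
      using that assms(3) finite_subset[OF that]
      by (simp add: g_def card_Diff_subset prod.distrib prod_cis sum_distrib_left)
    then show ?thesis
      unfolding F_def by (simp add: prod_add_mult_eq_sum_Pow[OF assms(3)])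
  qed
  have "of_nat N * (of_real ?P * ?\<Sigma>) = of_nat N * (\<Sum>A | A \<in> Pow I \<and> card A = s. g A)"
    by (simp add: g_def sum_distrib_left)
  also have "\<dots> = (\<Sum>m<N. (\<omega> ^ m) ^ (N - s) * F (\<omega> ^ m))"
    unfolding F_eq \<omega>_def using assms(3,5) card_mono[OF assms(3)]
    by (intro sum_root_unity_filter[symmetric]) (auto simp: N_def less_Suc_eq_le)
  finally have filter: "of_nat N * (of_real ?P * ?\<Sigma>) = (\<Sum>m<N. (\<omega> ^ m) ^ (N - s) * F (\<omega> ^ m))" .
  have "real N * (?P * cmod ?\<Sigma>) = cmod (of_nat N * (of_real ?P * ?\<Sigma>))"
    using assms(1,2) by (simp add: norm_mult del: of_real_mult of_real_power)
  also have "\<dots> \<le> (\<Sum>m<N. cmod (F (\<omega> ^ m)))"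
    unfolding filter by (rule norm_sum[THEN order_trans]) (simp add: norm_mult norm_power \<omega>_def)
  also have "\<dots> \<le> real N * ?E"
    using sum_mono[of "{..<N}" "\<lambda>m. cmod (F (\<omega> ^ m))" "\<lambda>_. ?E"]
      norm_prod_bernoulli_cis_unit_le[OF assms(1-4) _ assms(6)]
    by (simp add: F_def \<omega>_def norm_power)
  finally show ?thesis
    by (simp add: N_def)
qed

lemma binomial_term_le_mode:
  fixes n s k :: nat
  assumes "s \<le> n" "k \<le> n"
  shows "(n choose k) * s ^ k * (n - s) ^ (n - k) \<le> (n choose s) * s ^ s * (n - s) ^ (n - s)"
proof -
  define f where "f k = (n choose k) * s ^ k * (n - s) ^ (n - k)" for k
  have ratio: "f (Suc k) * (Suc k * (n - s)) = f k * ((n - k) * s)" if "k < n" for k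
  proof -
    define m where "m = n - Suc k"
    have m: "n - Suc k = m" "n - k = Suc m"
      using that by (simp_all add: m_def)
    have "f (Suc k) * (Suc k * (n - s)) = (Suc k * (n choose Suc k)) * (s ^ Suc k * (n - s) ^ Suc m)"
      by (simp only: f_def m power_Suc mult_ac)
    also have "Suc k * (n choose Suc k) = Suc m * (n choose k)"
      unfolding m(2)[symmetric] by (simp only: binomial_absorption binomial_absorb_comp)
    also have "Suc m * (n choose k) * (s ^ Suc k * (n - s) ^ Suc m) = f k * ((n - k) * s)"
      by (simp only: f_def m power_Suc mult_ac)
    finally show ?thesis .
  qed
  have up: "f k \<le> f (Suc k)" if "k < s" for k
  proof (cases "s = n")
    case True
    with that show ?thesis by (simp add: f_def power_0_left)
  next
    case False
    have "Suc k * (n - s) \<le> (n - k) * s"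
      using mult_le_mono[of "Suc k" s "n - s" "n - k"] that by (simp add: mult.commute)
    then have "f k * (Suc k * (n - s)) \<le> f k * ((n - k) * s)"
      by (rule mult_le_mono2)
    also have "\<dots> = f (Suc k) * (Suc k * (n - s))"
      using ratio[of k] that assms(1) by simp
    finally show ?thesis
      using False assms(1) by simp
  qed
  have down: "f (Suc k) \<le> f k" if "s \<le> k" "k < n" for k
  proof (cases "s = 0")
    case True
    then show ?thesis by (simp add: f_def)
  next
    case False
    have "(n - k) * s \<le> Suc k * (n - s)"
      using mult_le_mono[of "n - k" "n - s" s "Suc k"] that by (simp only: mult.commute)
    then have "f (Suc k) * ((n - k) * s) \<le> f (Suc k) * (Suc k * (n - s))"
      by (rule mult_le_mono2)
    also have "\<dots> = f k * ((n - k) * s)"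
      using ratio[of k] that by simp
    finally show ?thesis
      using False that by simp
  qed
  show ?thesis
  proof (cases "k \<le> s")
    case True
    then have "f k \<le> f s"
      by (induction rule: dec_induct) (auto intro: order_trans up)
    then show ?thesis by (simp add: f_def)
  next
    case False
    then have "s \<le> k" by simp
    then have "f k \<le> f s"
      using assms(2) by (induction rule: dec_induct) (auto intro: order_trans[OF down])
    then show ?thesis by (simp add: f_def)
  qed
qed

lemma inverse_Suc_le_binomial_mode:
  fixes n s :: nat
  assumes "s \<le> n" "n > 0"
  shows "1 / real (Suc n) \<le> real (n choose s) * (real s / n) ^ s * (1 - real s / n) ^ (n - s)"
proof -
  define M where "M = (n choose s) * s ^ s * (n - s) ^ (n - s)"
  have "n ^ n = (\<Sum>k\<le>n. (n choose k) * s ^ k * (n - s) ^ (n - k))"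
    using binomial_ring[of s "n - s" n] assms(1) by simp
  also have "\<dots> \<le> (\<Sum>k\<le>n. M)"
    unfolding M_def by (intro sum_mono binomial_term_le_mode assms) simp
  also have "\<dots> = Suc n * M"
    by simp
  finally have "real n ^ n \<le> real (Suc n) * real M"
    unfolding of_nat_power[symmetric] of_nat_mult[symmetric] of_nat_le_iff .
  moreover have "1 - real s / n = real (n - s) / n"
    using assms by (simp add: of_nat_diff field_simps)
  ultimately show ?thesis
    using assms by (simp add: M_def power_divide field_simps flip: power_add)
qed

lemma bij_betw_subsets_slice:
  "bij_betw (\<lambda>A. restrict (\<lambda>j. of_bool (j \<in> A)) {1..n}) {A. A \<subseteq> {1..n} \<and> card A = s} (slice n s)"
proof (rule bij_betwI[where g = "\<lambda>x. {j \<in> {1..n}. x j = 1}"])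
  have sum_eq_card: "(\<Sum>j=1..n. restrict (\<lambda>j. of_bool (j \<in> A)) {1..n} j) = card A"
    if "A \<subseteq> {1..n}" for A
    using that by (simp add: Int_absorb1 Int_def[symmetric])
  show "(\<lambda>A. restrict (\<lambda>j. of_bool (j \<in> A)) {1..n}) \<in> {A. A \<subseteq> {1..n} \<and> card A = s} \<rightarrow> slice n s"
    using sum_eq_card by (auto simp: slice_def)
  show inverse: "restrict (\<lambda>j. of_bool (j \<in> {j \<in> {1..n}. x j = 1})) {1..n} = x"
    if "x \<in> slice n s" for x
  proof (rule extensionalityI[of _ "{1..n}"])
    show "x \<in> extensional {1..n}"
      using that by (simp add: slice_def PiE_def)
    show "restrict (\<lambda>j. of_bool (j \<in> {j \<in> {1..n}. x j = 1})) {1..n} j = x j" if "j \<in> {1..n}" for j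
      using PiE_mem[of x "{1..n}" "\<lambda>_. {0, 1}" j] \<open>x \<in> slice n s\<close> that by (auto simp: slice_def)
  qed simp
  show "(\<lambda>x. {j \<in> {1..n}. x j = 1}) \<in> slice n s \<rightarrow> {A. A \<subseteq> {1..n} \<and> card A = s}"
  proof
    fix x assume x: "x \<in> slice n s"
    have "(\<Sum>j=1..n. x j) = (\<Sum>j=1..n. restrict (\<lambda>j. of_bool (j \<in> {j \<in> {1..n}. x j = 1})) {1..n} j)"
      by (subst inverse[OF x]) (rule refl)
    also have "\<dots> = card {j \<in> {1..n}. x j = 1}"
      by (rule sum_eq_card) auto
    finally show "{j \<in> {1..n}. x j = 1} \<in> {A. A \<subseteq> {1..n} \<and> card A = s}"
      using x by (auto simp: slice_def)
  qed
qed auto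

lemma card_slice: "card (slice n s) = n choose s"
  using bij_betw_same_card[OF bij_betw_subsets_slice, of n s] n_subsets[of "{1..n}" s] by simp

lemma expectation_pmf_of_set_slice:
  fixes f :: "(nat \<Rightarrow> nat) \<Rightarrow> 'b::{banach, second_countable_topology}"
  assumes "s \<le> n"
  shows "measure_pmf.expectation (pmf_of_set (slice n s)) f
    = (1 / real (n choose s)) *\<^sub>R
        (\<Sum>A | A \<subseteq> {1..n} \<and> card A = s. f (restrict (\<lambda>j. of_bool (j \<in> A)) {1..n}))"
proof -
  have "slice n s \<noteq> {}" "finite (slice n s)"
    using card_slice[of n s] assms by (auto intro: card_ge_0_finite)
  then have "measure_pmf.expectation (pmf_of_set (slice n s)) f = (1 / real (n choose s)) *\<^sub>R sum f (slice n s)"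
    by (subst integral_measure_pmf[of "slice n s"]) (auto simp: card_slice scaleR_sum_right)
  also have "sum f (slice n s)
      = (\<Sum>A | A \<subseteq> {1..n} \<and> card A = s. f (restrict (\<lambda>j. of_bool (j \<in> A)) {1..n}))"
    by (rule sum.reindex_bij_betw[OF bij_betw_subsets_slice, symmetric])
  finally show ?thesis .
qed

lemma expectation_pmf_of_set_slice_cis:
  assumes "s \<le> n"
  shows "measure_pmf.expectation (pmf_of_set (slice n s)) (\<lambda>x. cis (t * (\<Sum>j=1..n. a j * real (x j))))
    = (1 / real (n choose s)) *\<^sub>R (\<Sum>A | A \<subseteq> {1..n} \<and> card A = s. cis (t * sum a A))"
  unfolding expectation_pmf_of_set_slice[OF assms]
  by (intro arg_cong[where f = "scaleR _"] sum.cong refl) (auto simp: Int_absorb1)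

lemma variance_pmf_of_set_eq_sum_sq_diff:
  fixes f :: "'a \<Rightarrow> real"
  assumes "finite I" "I \<noteq> {}"
  shows "measure_pmf.variance (pmf_of_set I) f = (\<Sum>j\<in>I. \<Sum>k\<in>I. (f j - f k)\<^sup>2) / (2 * card I ^ 2)"
proof -
  define n S Q where "n = real (card I)" and "S = (\<Sum>j\<in>I. f j)" and "Q = (\<Sum>j\<in>I. (f j)\<^sup>2)"
  have "n > 0"
    using assms by (simp add: n_def card_gt_0_iff)
  have sum_sq_sub: "(\<Sum>k\<in>I. (f k - c)\<^sup>2) = Q - 2 * c * S + n * c\<^sup>2" for c
  proof -
    have "(f k - c)\<^sup>2 = (f k)\<^sup>2 - 2 * c * f k + c\<^sup>2" for k
      by (simp add: power2_diff mult_ac)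
    then show ?thesis
      by (simp add: sum.distrib sum_subtractf sum_distrib_left n_def S_def Q_def)
  qed
  have "measure_pmf.variance (pmf_of_set I) f = (\<Sum>k\<in>I. (f k - S / n)\<^sup>2) / n"
    using assms by (simp add: integral_pmf_of_set n_def S_def)
  also have "\<dots> = (n * Q - S\<^sup>2) / n\<^sup>2"
    unfolding sum_sq_sub using \<open>n > 0\<close> by (simp add: field_simps power2_eq_square)
  finally have variance: "measure_pmf.variance (pmf_of_set I) f = (n * Q - S\<^sup>2) / n\<^sup>2" .
  have "(\<Sum>j\<in>I. \<Sum>k\<in>I. (f j - f k)\<^sup>2) = (\<Sum>j\<in>I. \<Sum>k\<in>I. (f k - f j)\<^sup>2)"
    by (simp add: power2_commute)
  also have "\<dots> = (\<Sum>j\<in>I. Q - 2 * f j * S + n * (f j)\<^sup>2)"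
    by (simp only: sum_sq_sub)
  also have "\<dots> = 2 * (n * Q - S\<^sup>2)"
    by (simp add: sum.distrib sum_subtractf n_def S_def Q_def power2_eq_square
        flip: sum_distrib_left sum_distrib_right)
  finally show ?thesis
    using variance \<open>n > 0\<close> by (simp add: n_def[symmetric] field_simps)
qed

theorem lemma2p8:
  fixes n s :: nat and a :: "nat \<Rightarrow> real" and t :: real
  assumes "n \<ge> 1" and "s \<le> n"
    and "\<And>j k. j \<in> {1..n} \<Longrightarrow> k \<in> {1..n} \<Longrightarrow> \<bar>(a j - a k) * t\<bar> \<le> pi"
  shows "let p = real s / real n in
    cmod (measure_pmf.expectation (pmf_of_set (slice n s))
            (\<lambda>x. cis (t * (\<Sum>j=1..n. a j * real (x j)))))
    \<le> real (n + 1) * exp (- 2 * p * (1 - p) * t\<^sup>2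
          * measure_pmf.variance (pmf_of_set {1..n}) a * real n / pi\<^sup>2)"
proof -
  define p where "p = real s / real n"
  define P where "P = p ^ s * (1 - p) ^ (n - s)"
  define \<Sigma> where "\<Sigma> = (\<Sum>A | A \<subseteq> {1..n} \<and> card A = s. cis (t * sum a A))"
  define Q where "Q = (\<Sum>j\<in>{1..n}. \<Sum>k\<in>{1..n}. (a j - a k)\<^sup>2)"
  have "0 \<le> p" "p \<le> 1"
    using assms(1,2) by (auto simp: p_def)
  have binomial_mode: "1 \<le> real (Suc n) * (real (n choose s) * P)"
    using inverse_Suc_le_binomial_mode[OF assms(2)] assms(1) by (simp add: P_def p_def field_simps)
  have estimate: "P * cmod \<Sigma> \<le> exp (- p * (1 - p) * t\<^sup>2 * Q / (n * pi\<^sup>2))"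
    using norm_sum_cis_subsets_le[OF \<open>0 \<le> p\<close> \<open>p \<le> 1\<close>, of "{1..n}" s a t] assms
    by (simp add: P_def \<Sigma>_def Q_def)
  have variance: "measure_pmf.variance (pmf_of_set {1..n}) a = Q / (2 * n\<^sup>2)"
    using variance_pmf_of_set_eq_sum_sq_diff[of "{1..n}" a] assms(1) by (simp add: Q_def)
  have "cmod ((1 / real (n choose s)) *\<^sub>R \<Sigma>) \<le> real (Suc n) * (P * cmod \<Sigma>)"
    using mult_right_mono[OF binomial_mode norm_ge_zero[of \<Sigma>]] assms(2)
    by (simp add: divide_le_eq mult_ac)
  also have "\<dots> \<le> real (Suc n) * exp (- p * (1 - p) * t\<^sup>2 * Q / (n * pi\<^sup>2))"
    using estimate by (intro mult_left_mono) auto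
  also have "- p * (1 - p) * t\<^sup>2 * Q / (n * pi\<^sup>2)
      = - 2 * p * (1 - p) * t\<^sup>2 * (Q / (2 * n\<^sup>2)) * n / pi\<^sup>2"
    using assms(1) by (simp add: power2_eq_square)
  finally show ?thesis
    unfolding Let_def p_def[symmetric] expectation_pmf_of_set_slice_cis[OF assms(2)] variance
    by (simp add: \<Sigma>_def)
qed

end
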